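(* Let $\omega\in\mathbb{R}^d$, $N\in\mathbb{N}$, $\rho>0$, $n\ge1$, and let $\Gamma\subset\mathbb{C}$ be finite with $0<\#\Gamma\le n$, such that every $\alpha\in\Gamma$ is $(N,\rho)$-linked to some $\beta\in\Gamma$. Let $\mathcal{E}\subseteq\Gamma$ be an equivalence class for the relation of being $(N,\rho)$-chain-linked. If $\mathcal{E}$ contains no odd $(N,\rho)$-loop, then there is a partition $\mathcal{E}=\Sigma_1\cup\Sigma_2$ such that: (i) if $\beta,\gamma\in\Sigma_1$ then $\beta$ and $\gamma$ are not $(N,\rho)$-linked, and likewise for $\Sigma_2$; (ii) if $\beta,\gamma\in\Sigma_1$ then $\beta$ and $\bar\gamma$ are $(nN,n\rho)$-linked, and likewise for $\Sigma_2$; (iii) if $\beta\in\Sigma_1$ and $\gamma\in\Sigma_2$ then $\beta$ and $\gamma$ are $(nN,n\rho)$-linked.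
   Context: For $k\in\mathbb{Z}^d$, $|k|=\sum_i|k_i|$. Two complex numbers $\alpha,\beta$ are $(N,\rho)$-linked if $|2i\pi\langle k,\omega\rangle-(\alpha-\bar\beta)|<\rho$ for some $k\in\mathbb{Z}^d$ with $|k|\le N$. An $(N,\rho)$-chain in $\Gamma$ of length $r-1$ is a sequence $\alpha_1,\dots,\alpha_r$ in $\Gamma$ with $\alpha_j$ and $\alpha_{j+1}$ $(N,\rho)$-linked for all $j$; $\alpha_1$ and $\alpha_r$ are then $(N,\rho)$-chain-linked. An $(N,\rho)$-loop is such a chain with $\alpha_1=\alpha_r$ (and $r\ge2$); it is odd if its length is odd. Under the stated hypothesis on $\Gamma$, being $(N,\rho)$-chain-linked is an equivalence relation on $\Gamma$. *)

theory Defs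
  imports "HOL-Analysis.Analysis"
begin

definition knorm :: "int ^ 'd \<Rightarrow> int" where
  "knorm k = (\<Sum>i\<in>UNIV. \<bar>k $ i\<bar>)"

definition kdot :: "int ^ 'd \<Rightarrow> real ^ 'd \<Rightarrow> real" where
  "kdot k \<omega> = (\<Sum>i\<in>UNIV. of_int (k $ i) * \<omega> $ i)"

definition linked :: "real ^ 'd \<Rightarrow> nat \<Rightarrow> real \<Rightarrow> complex \<Rightarrow> complex \<Rightarrow> bool" where
  "linked \<omega> N \<rho> \<alpha> \<beta> \<longleftrightarrow>
     (\<exists>k :: int ^ 'd. knorm k \<le> int N \<and>
        cmod (2 * \<i> * complex_of_real pi * complex_of_real (kdot k \<omega>) - (\<alpha> - cnj \<beta>)) < \<rho>)"

text \<open>An (N,rho)-chain in S: a nonempty list alpha_1..alpha_r of elements of S with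
  consecutive entries linked; its length is r - 1.\<close>
definition is_chain :: "real ^ 'd \<Rightarrow> nat \<Rightarrow> real \<Rightarrow> complex set \<Rightarrow> complex list \<Rightarrow> bool" where
  "is_chain \<omega> N \<rho> S xs \<longleftrightarrow> xs \<noteq> [] \<and> set xs \<subseteq> S \<and>
     (\<forall>j. Suc j < length xs \<longrightarrow> linked \<omega> N \<rho> (xs ! j) (xs ! Suc j))"

definition chain_linked :: "real ^ 'd \<Rightarrow> nat \<Rightarrow> real \<Rightarrow> complex set \<Rightarrow> complex \<Rightarrow> complex \<Rightarrow> bool" where
  "chain_linked \<omega> N \<rho> S \<alpha> \<beta> \<longleftrightarrow>
     (\<exists>xs. is_chain \<omega> N \<rho> S xs \<and> hd xs = \<alpha> \<and> last xs = \<beta>)"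

definition has_odd_loop :: "real ^ 'd \<Rightarrow> nat \<Rightarrow> real \<Rightarrow> complex set \<Rightarrow> bool" where
  "has_odd_loop \<omega> N \<rho> S \<longleftrightarrow>
     (\<exists>xs. is_chain \<omega> N \<rho> S xs \<and> length xs \<ge> 2 \<and> hd xs = last xs \<and> odd (length xs - 1))"

end

theory Submission
  imports Defs
begin

text \<open>An \<open>(N,\<rho>)\<close>-link from \<open>\<alpha>\<close> to \<open>\<beta>\<close> controls \<open>\<alpha> - cnj \<beta>\<close>; adding the conjugate of the defect
  of a link from \<open>\<beta>\<close> to \<open>\<gamma>\<close> controls \<open>\<alpha> - \<gamma>\<close>. Hence the ends of a chain with \<open>m\<close> links are
  \<open>(mN, m\<rho>)\<close>-linked when \<open>m\<close> is odd, and up to conjugation of one end when \<open>m\<close> is even.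
  Without odd loops the parity of the number of links of a chain in the class depends only on
  its ends, so the class splits into the points joined to a base point by an even resp. odd
  number of links: points in the same part are never directly linked and are joined by an even
  chain, points in different parts by an odd one. Removing repetitions makes these chains
  of at most \<open>#\<Gamma> \<le> n\<close> points.\<close>

lemma linked_sym:
  assumes "linked \<omega> N \<rho> \<alpha> \<beta>"
  shows "linked \<omega> N \<rho> \<beta> \<alpha>"
proof -
  obtain k where k: "knorm k \<le> int N"
    "cmod (2 * \<i> * pi * kdot k \<omega> - (\<alpha> - cnj \<beta>)) < \<rho>"
    using assms unfolding linked_def by blast
  have "2 * \<i> * pi * kdot k \<omega> - (\<beta> - cnj \<alpha>) = - cnj (2 * \<i> * pi * kdot k \<omega> - (\<alpha> - cnj \<beta>))"
    by (simp add: complex_eq_iff)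
  then show ?thesis
    using k unfolding linked_def by (metis complex_mod_cnj norm_minus_cancel)
qed

lemma linked_mono:
  assumes "linked \<omega> N \<rho> \<alpha> \<beta>" and "N \<le> N'" and "\<rho> \<le> \<rho>'"
  shows "linked \<omega> N' \<rho>' \<alpha> \<beta>"
  using assms unfolding linked_def by (meson of_nat_mono order_trans less_le_trans)

lemma linked_cnj_self:
  assumes "\<rho> > 0"
  shows "linked \<omega> N \<rho> \<alpha> (cnj \<alpha>)"
  unfolding linked_def using assms by (intro exI[of _ 0]) (simp add: knorm_def kdot_def)

lemma knorm_diff_le: "knorm (k - l) \<le> knorm k + knorm l"
  unfolding knorm_def by (simp add: sum.distrib[symmetric] sum_mono abs_triangle_ineq4)

lemma kdot_diff: "kdot (k - l) \<omega> = kdot k \<omega> - kdot l \<omega>"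
  unfolding kdot_def by (simp add: sum_subtractf left_diff_distrib)

text \<open>The frequency vectors subtract because the second defect enters conjugated.\<close>
lemma linked_trans_cnj:
  assumes "linked \<omega> N \<rho> \<alpha> \<beta>" and "linked \<omega> N' \<rho>' \<beta> \<gamma>"
  shows "linked \<omega> (N + N') (\<rho> + \<rho>') \<alpha> (cnj \<gamma>)"
proof -
  obtain k where k: "knorm k \<le> int N" "cmod (2 * \<i> * pi * kdot k \<omega> - (\<alpha> - cnj \<beta>)) < \<rho>"
    using assms(1) unfolding linked_def by blast
  obtain l where l: "knorm l \<le> int N'" "cmod (2 * \<i> * pi * kdot l \<omega> - (\<beta> - cnj \<gamma>)) < \<rho>'"
    using assms(2) unfolding linked_def by blast
  have "2 * \<i> * pi * kdot (k - l) \<omega> - (\<alpha> - cnj (cnj \<gamma>))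
      = (2 * \<i> * pi * kdot k \<omega> - (\<alpha> - cnj \<beta>)) + cnj (2 * \<i> * pi * kdot l \<omega> - (\<beta> - cnj \<gamma>))"
    by (simp add: kdot_diff algebra_simps)
  also have "cmod \<dots> < \<rho> + \<rho>'"
    using k(2) l(2) norm_triangle_ineq[of _ "cnj _"] by (smt (verit) complex_mod_cnj)
  finally show ?thesis
    unfolding linked_def using knorm_diff_le[of k l] k(1) l(1) by (intro exI[of _ "k - l"]) simp
qed

lemma is_chain_iff_successively:
  "is_chain \<omega> N \<rho> S xs \<longleftrightarrow> xs \<noteq> [] \<and> set xs \<subseteq> S \<and> successively (linked \<omega> N \<rho>) xs"
  unfolding is_chain_def successively_conv_nth ..

definition chain_between ::
    "real ^ 'd \<Rightarrow> nat \<Rightarrow> real \<Rightarrow> complex set \<Rightarrow> complex \<Rightarrow> complex \<Rightarrow> complex list \<Rightarrow> bool" where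
  "chain_between \<omega> N \<rho> S \<alpha> \<beta> xs \<longleftrightarrow> is_chain \<omega> N \<rho> S xs \<and> hd xs = \<alpha> \<and> last xs = \<beta>"

lemma chain_linked_iff_chain_between:
  "chain_linked \<omega> N \<rho> S \<alpha> \<beta> \<longleftrightarrow> (\<exists>xs. chain_between \<omega> N \<rho> S \<alpha> \<beta> xs)"
  unfolding chain_linked_def chain_between_def ..

lemma chain_between_link:
  "\<alpha> \<in> S \<Longrightarrow> \<beta> \<in> S \<Longrightarrow> linked \<omega> N \<rho> \<alpha> \<beta> \<Longrightarrow> chain_between \<omega> N \<rho> S \<alpha> \<beta> [\<alpha>, \<beta>]"
  by (simp add: chain_between_def is_chain_iff_successively)

lemma chain_between_endpoints:
  "chain_between \<omega> N \<rho> S \<alpha> \<beta> xs \<Longrightarrow> \<alpha> \<in> S \<and> \<beta> \<in> S"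
  unfolding chain_between_def is_chain_iff_successively by auto

lemma chain_between_rev:
  "chain_between \<omega> N \<rho> S \<alpha> \<beta> xs \<Longrightarrow> chain_between \<omega> N \<rho> S \<beta> \<alpha> (rev xs)"
  unfolding chain_between_def is_chain_iff_successively
  by (auto simp: hd_rev last_rev linked_sym elim: successively_mono)

lemma chain_between_append:
  assumes "chain_between \<omega> N \<rho> S \<alpha> \<beta> xs" and "chain_between \<omega> N \<rho> S \<beta> \<gamma> ys"
  shows "chain_between \<omega> N \<rho> S \<alpha> \<gamma> (xs @ tl ys)"
proof -
  obtain zs where ys: "ys = \<beta> # zs"
    using assms(2) unfolding chain_between_def is_chain_def by (cases ys) auto
  show ?thesis
    using assms unfolding chain_between_def is_chain_iff_successively ys
    by (auto simp: successively_append_iff successively_Cons)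
qed

lemma chain_between_mono:
  "chain_between \<omega> N \<rho> S \<alpha> \<beta> xs \<Longrightarrow> set xs \<subseteq> T \<Longrightarrow> chain_between \<omega> N \<rho> T \<alpha> \<beta> xs"
  unfolding chain_between_def is_chain_iff_successively by blast

lemma chain_between_distinct:
  assumes "chain_between \<omega> N \<rho> S \<alpha> \<beta> xs"
  shows "\<exists>ys. chain_between \<omega> N \<rho> S \<alpha> \<beta> ys \<and> distinct ys"
  using assms
proof (induction "length xs" arbitrary: xs rule: less_induct)
  case less
  show ?case
  proof (cases "distinct xs")
    case False
    then obtain us vs ws u where xs: "xs = us @ [u] @ vs @ [u] @ ws"
      using not_distinct_decomp by blast
    have "successively (linked \<omega> N \<rho>) (us @ [u] @ ws)"
      using less.prems unfolding chain_between_def is_chain_iff_successively xs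
      unfolding successively_append_iff by auto
    then have "chain_between \<omega> N \<rho> S \<alpha> \<beta> (us @ [u] @ ws)"
      using less.prems unfolding chain_between_def is_chain_iff_successively xs
      by (auto simp: hd_append last_append)
    then show ?thesis
      using less.hyps[of "us @ [u] @ ws"] xs by auto
  qed (use less.prems in blast)
qed

lemma chain_between_length_le_card:
  assumes "chain_between \<omega> N \<rho> S \<alpha> \<beta> xs" and "finite S"
  shows "\<exists>ys. chain_between \<omega> N \<rho> S \<alpha> \<beta> ys \<and> length ys \<le> card S"
proof -
  obtain ys where ys: "chain_between \<omega> N \<rho> S \<alpha> \<beta> ys" "distinct ys"
    using chain_between_distinct[OF assms(1)] by blast
  have "length ys = card (set ys)"
    using ys(2) by (simp add: distinct_card)
  also have "\<dots> \<le> card S"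
    using ys(1) assms(2) unfolding chain_between_def is_chain_def by (simp add: card_mono)
  finally show ?thesis
    using ys(1) by blast
qed

lemma successively_linked_endpoints:
  assumes "successively (linked \<omega> N \<rho>) xs" and "2 \<le> length xs"
  shows "linked \<omega> ((length xs - 1) * N) (real (length xs - 1) * \<rho>)
           (hd xs) (if even (length xs) then last xs else cnj (last xs))"
  using assms
proof (induction xs rule: induct_list012)
  case (3 x y zs)
  show ?case
  proof (cases "zs = []")
    case False
    have link: "linked \<omega> N \<rho> x y" and succ: "successively (linked \<omega> N \<rho>) (y # zs)"
      using "3.prems"(1) by simp_all
    have "2 \<le> length (y # zs)"
      using False by (cases zs) auto
    from linked_trans_cnj[OF link "3.IH"(2)[OF succ this, unfolded list.sel(1)]]
    show ?thesis
      using False by (cases "even (length zs)") (simp_all add: algebra_simps)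
  qed (use "3.prems" in simp)
qed simp_all

lemma chain_between_linked:
  assumes "chain_between \<omega> N \<rho> S \<alpha> \<beta> xs" and "length xs \<le> n" and "\<rho> > 0"
  shows "linked \<omega> (n * N) (real n * \<rho>) \<alpha> (if even (length xs) then \<beta> else cnj \<beta>)"
proof (cases "2 \<le> length xs")
  case True
  have "linked \<omega> ((length xs - 1) * N) (real (length xs - 1) * \<rho>)
          \<alpha> (if even (length xs) then \<beta> else cnj \<beta>)"
    using successively_linked_endpoints[OF _ True] assms(1)
    unfolding chain_between_def is_chain_iff_successively by blast
  then show ?thesis
    by (rule linked_mono) (use assms in \<open>auto intro: mult_right_mono\<close>)
next
  case False
  then obtain x where "xs = [x]"
    using assms(1) unfolding chain_between_def is_chain_def
    by (cases xs) (auto simp: Suc_le_eq)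
  then have "\<alpha> = \<beta>" and "length xs = 1"
    using assms(1) unfolding chain_between_def by auto
  then show ?thesis
    using assms(2,3) by (simp add: linked_cnj_self)
qed

lemma chain_between_parity:
  assumes "\<not> has_odd_loop \<omega> N \<rho> S"
    and "chain_between \<omega> N \<rho> S \<alpha> \<beta> xs" and "chain_between \<omega> N \<rho> S \<alpha> \<beta> ys"
  shows "even (length xs) \<longleftrightarrow> even (length ys)"
proof -
  let ?loop = "xs @ tl (rev ys)"
  have loop: "chain_between \<omega> N \<rho> S \<alpha> \<alpha> ?loop"
    using chain_between_append[OF assms(2) chain_between_rev[OF assms(3)]] .
  have "xs \<noteq> []" "ys \<noteq> []"
    using assms(2,3) unfolding chain_between_def is_chain_def by auto
  then have "length ?loop + 1 = length xs + length ys"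
    by simp
  moreover have "\<not> (2 \<le> length ?loop \<and> odd (length ?loop - 1))"
    using assms(1) loop unfolding has_odd_loop_def chain_between_def by metis
  ultimately show ?thesis
    using \<open>xs \<noteq> []\<close> \<open>ys \<noteq> []\<close> by (simp only: length_greater_0_conv[symmetric]) presburger
qed

lemma chain_between_parity_triangle:
  assumes "\<not> has_odd_loop \<omega> N \<rho> S"
    and "chain_between \<omega> N \<rho> S \<alpha> \<beta> xs" and "chain_between \<omega> N \<rho> S \<alpha> \<gamma> ys"
    and "chain_between \<omega> N \<rho> S \<beta> \<gamma> zs"
  shows "even (length zs) \<longleftrightarrow> (even (length xs) \<noteq> even (length ys))"
proof -
  have "even (length (xs @ tl zs)) \<longleftrightarrow> even (length ys)"
    using chain_between_parity[OF assms(1) chain_between_append[OF assms(2,4)] assms(3)] .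
  moreover have "xs \<noteq> []" "zs \<noteq> []"
    using assms(2,4) unfolding chain_between_def is_chain_def by auto
  ultimately show ?thesis
    by (simp only: length_append length_tl length_greater_0_conv[symmetric]) presburger
qed

text \<open>Even number of links, i.e. a list of odd length.\<close>
definition even_side :: "real ^ 'd \<Rightarrow> nat \<Rightarrow> real \<Rightarrow> complex set \<Rightarrow> complex \<Rightarrow> complex set" where
  "even_side \<omega> N \<rho> S \<alpha> = {\<beta> \<in> S. \<exists>xs. chain_between \<omega> N \<rho> S \<alpha> \<beta> xs \<and> odd (length xs)}"

lemma chain_between_even_side:
  assumes "\<not> has_odd_loop \<omega> N \<rho> S" and "\<forall>\<delta>\<in>S. chain_linked \<omega> N \<rho> S \<alpha> \<delta>"
    and "chain_between \<omega> N \<rho> S \<beta> \<gamma> zs"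
  shows "even (length zs) \<longleftrightarrow> ((\<beta> \<in> even_side \<omega> N \<rho> S \<alpha>) \<noteq> (\<gamma> \<in> even_side \<omega> N \<rho> S \<alpha>))"
proof -
  have "\<beta> \<in> S" "\<gamma> \<in> S"
    using chain_between_endpoints[OF assms(3)] by auto
  then obtain xs ys where xs: "chain_between \<omega> N \<rho> S \<alpha> \<beta> xs" and ys: "chain_between \<omega> N \<rho> S \<alpha> \<gamma> ys"
    using assms(2) unfolding chain_linked_iff_chain_between by blast
  have "\<beta> \<in> even_side \<omega> N \<rho> S \<alpha> \<longleftrightarrow> odd (length xs)"
    "\<gamma> \<in> even_side \<omega> N \<rho> S \<alpha> \<longleftrightarrow> odd (length ys)"
    using chain_between_parity[OF assms(1)] xs ys \<open>\<beta> \<in> S\<close> \<open>\<gamma> \<in> S\<close>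
    unfolding even_side_def by blast+
  then show ?thesis
    using chain_between_parity_triangle[OF assms(1) xs ys assms(3)] by simp
qed

lemma chain_between_subset_class:
  assumes "chain_between \<omega> N \<rho> S \<alpha> \<beta> xs"
  shows "set xs \<subseteq> {\<gamma> \<in> S. chain_linked \<omega> N \<rho> S \<alpha> \<gamma>}"
proof
  fix \<gamma> assume "\<gamma> \<in> set xs"
  then obtain us vs where xs: "xs = us @ \<gamma> # vs"
    by (meson split_list)
  then have "chain_between \<omega> N \<rho> S \<alpha> \<gamma> (us @ [\<gamma>])"
    using assms unfolding chain_between_def is_chain_iff_successively
    by (auto simp: successively_append_iff successively_Cons hd_append)
  then show "\<gamma> \<in> {\<gamma> \<in> S. chain_linked \<omega> N \<rho> S \<alpha> \<gamma>}"
    using chain_between_endpoints chain_linked_iff_chain_between by blast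
qed

lemma chain_linked_class_from_base:
  assumes "E = {\<beta> \<in> S. chain_linked \<omega> N \<rho> S \<alpha> \<beta>}"
  shows "\<forall>\<beta>\<in>E. chain_linked \<omega> N \<rho> E \<alpha> \<beta>"
proof
  fix \<beta> assume "\<beta> \<in> E"
  then obtain xs where xs: "chain_between \<omega> N \<rho> S \<alpha> \<beta> xs"
    using assms chain_linked_iff_chain_between by blast
  have "set xs \<subseteq> E"
    using chain_between_subset_class[OF xs] assms by simp
  then show "chain_linked \<omega> N \<rho> E \<alpha> \<beta>"
    using chain_between_mono[OF xs] chain_linked_iff_chain_between by blast
qed

lemma chain_linked_through:
  assumes "chain_linked \<omega> N \<rho> S \<alpha> \<beta>" and "chain_linked \<omega> N \<rho> S \<alpha> \<gamma>"
  shows "chain_linked \<omega> N \<rho> S \<beta> \<gamma>"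
proof -
  obtain xs ys where xs: "chain_between \<omega> N \<rho> S \<alpha> \<beta> xs" and ys: "chain_between \<omega> N \<rho> S \<alpha> \<gamma> ys"
    using assms chain_linked_iff_chain_between by blast
  show ?thesis
    unfolding chain_linked_iff_chain_between
    using chain_between_append[OF chain_between_rev[OF xs] ys] by blast
qed

lemma even_side_not_linked:
  assumes "\<not> has_odd_loop \<omega> N \<rho> S" and "\<forall>\<delta>\<in>S. chain_linked \<omega> N \<rho> S \<alpha> \<delta>"
    and "\<beta> \<in> S" and "\<gamma> \<in> S"
    and "\<beta> \<in> even_side \<omega> N \<rho> S \<alpha> \<longleftrightarrow> \<gamma> \<in> even_side \<omega> N \<rho> S \<alpha>"
  shows "\<not> linked \<omega> N \<rho> \<beta> \<gamma>"
  using chain_between_even_side[OF assms(1,2) chain_between_link[OF assms(3,4)]] assms(5) by auto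

lemma even_side_linked:
  assumes "\<not> has_odd_loop \<omega> N \<rho> S" and "\<forall>\<delta>\<in>S. chain_linked \<omega> N \<rho> S \<alpha> \<delta>"
    and "finite S" and "card S \<le> n" and "\<rho> > 0" and "\<beta> \<in> S" and "\<gamma> \<in> S"
  shows "linked \<omega> (n * N) (real n * \<rho>) \<beta>
           (if \<beta> \<in> even_side \<omega> N \<rho> S \<alpha> \<longleftrightarrow> \<gamma> \<in> even_side \<omega> N \<rho> S \<alpha> then cnj \<gamma> else \<gamma>)"
proof -
  obtain xs where "chain_between \<omega> N \<rho> S \<beta> \<gamma> xs"
    using chain_linked_through assms(2,6,7) chain_linked_iff_chain_between by blast
  then obtain zs where zs: "chain_between \<omega> N \<rho> S \<beta> \<gamma> zs" "length zs \<le> n"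
    using chain_between_length_le_card assms(3,4) order_trans by blast
  from chain_between_linked[OF zs assms(5)] chain_between_even_side[OF assms(1,2) zs(1)]
  show ?thesis
    by (smt (verit))
qed

theorem lemma13:
  fixes \<omega> :: "real ^ 'd" and N n :: nat and \<rho> :: real
    and \<Gamma> \<E> :: "complex set"
  assumes "\<rho> > 0" and "n \<ge> 1"
    and "finite \<Gamma>" and "0 < card \<Gamma>" and "card \<Gamma> \<le> n"
    and "\<forall>\<alpha>\<in>\<Gamma>. \<exists>\<beta>\<in>\<Gamma>. linked \<omega> N \<rho> \<alpha> \<beta>"
    and "\<exists>\<alpha>\<in>\<Gamma>. \<E> = {\<beta>\<in>\<Gamma>. chain_linked \<omega> N \<rho> \<Gamma> \<alpha> \<beta>}"
    and "\<not> has_odd_loop \<omega> N \<rho> \<E>"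
  shows "\<exists>\<Sigma>1 \<Sigma>2. \<E> = \<Sigma>1 \<union> \<Sigma>2 \<and> \<Sigma>1 \<inter> \<Sigma>2 = {} \<and>
    (\<forall>\<beta>\<in>\<Sigma>1. \<forall>\<gamma>\<in>\<Sigma>1. \<not> linked \<omega> N \<rho> \<beta> \<gamma>) \<and>
    (\<forall>\<beta>\<in>\<Sigma>2. \<forall>\<gamma>\<in>\<Sigma>2. \<not> linked \<omega> N \<rho> \<beta> \<gamma>) \<and>
    (\<forall>\<beta>\<in>\<Sigma>1. \<forall>\<gamma>\<in>\<Sigma>1. linked \<omega> (n * N) (real n * \<rho>) \<beta> (cnj \<gamma>)) \<and>
    (\<forall>\<beta>\<in>\<Sigma>2. \<forall>\<gamma>\<in>\<Sigma>2. linked \<omega> (n * N) (real n * \<rho>) \<beta> (cnj \<gamma>)) \<and>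
    (\<forall>\<beta>\<in>\<Sigma>1. \<forall>\<gamma>\<in>\<Sigma>2. linked \<omega> (n * N) (real n * \<rho>) \<beta> \<gamma>)"
proof -
  obtain \<alpha> where E: "\<E> = {\<beta>\<in>\<Gamma>. chain_linked \<omega> N \<rho> \<Gamma> \<alpha> \<beta>}"
    using assms(7) by blast
  note from_base = chain_linked_class_from_base[OF E]
  have "\<E> \<subseteq> \<Gamma>"
    using E by blast
  then have "finite \<E>" and "card \<E> \<le> n"
    using assms(3,5) finite_subset card_mono order_trans by metis+
  define \<Sigma> where "\<Sigma> = even_side \<omega> N \<rho> \<E> \<alpha>"
  have "\<Sigma> \<subseteq> \<E>"
    unfolding \<Sigma>_def even_side_def by blast
  note far = even_side_linked[OF assms(8) from_base \<open>finite \<E>\<close> \<open>card \<E> \<le> n\<close> assms(1)]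
  have same_side: "linked \<omega> (n * N) (real n * \<rho>) \<beta> (cnj \<gamma>)"
    if "\<beta> \<in> \<E>" "\<gamma> \<in> \<E>" "\<beta> \<in> \<Sigma> \<longleftrightarrow> \<gamma> \<in> \<Sigma>" for \<beta> \<gamma>
    using far[OF that(1,2)] that(3) unfolding \<Sigma>_def by simp
  have other_side: "linked \<omega> (n * N) (real n * \<rho>) \<beta> \<gamma>"
    if "\<beta> \<in> \<E>" "\<gamma> \<in> \<E>" "\<beta> \<in> \<Sigma>" "\<gamma> \<notin> \<Sigma>" for \<beta> \<gamma>
    using far[OF that(1,2)] that(3,4) unfolding \<Sigma>_def by simp
  show ?thesis
    apply (rule exI[of _ \<Sigma>], rule exI[of _ "\<E> - \<Sigma>"])
    using \<open>\<Sigma> \<subseteq> \<E>\<close> even_side_not_linked[OF assms(8) from_base] same_side other_side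
    unfolding \<Sigma>_def by blast
qed

end
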